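(* Let $n\in\mathbb N$ be even and let $1_n=(1,2,\ldots,n)$. Let $$a_1(n)=\{\pi\in\mathcal P_2(n)\,:\,\#(\pi^{-1}1_n)=n/2-1\}.$$ For $1\le u<v<n$ let $\mathrm{NC}^{\rm T}_{2,u,v}(n)$ be the set of pairings $\pi\in\mathcal P_2(n)$ such that, with $\gamma=1_n\,(u-1,v)$ (where the transposition $(0,v)$ is interpreted as $(n,v)$): (i) the group $\langle\pi,\gamma\rangle$ acts transitively on $[n]$; (ii) $\#(\pi)+\#(\pi^{-1}\gamma)+\#(\gamma)=n+2$; (iii) $(u,v)$ is a cycle of $\pi$; (iv) for all $a\in\{1,\ldots,u-1\}$ (an empty condition when $u=1$), $\pi(a)\in[n]\setminus\{u,u+1,\ldots,v\}$. Let $\mathrm{NC}_2^{\rm T}(n)=\bigcup_{1\le u<v<n}\mathrm{NC}^{\rm T}_{2,u,v}(n)$. Then $a_1(n)=\mathrm{NC}_2^{\rm T}(n)$ as subsets of $\mathcal P_2(n)$.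
   Context: $[n]=\{1,\ldots,n\}$. $\mathcal P_2(n)$ is the set of pairings of $[n]$, each identified with the fixed-point-free involution of $[n]$ whose cycles are its blocks. Permutations are composed right to left, $(\sigma\rho)(x)=\sigma(\rho(x))$, and $\#(\sigma)$ denotes the number of cycles of $\sigma$, fixed points included. Note $1_n(u-1,v)=(u,\ldots,v)(1,\ldots,u-1,v+1,\ldots,n)$ has two cycles. The set $a_1(n)$ encodes the genus-one orientable ribbon graphs built from one $n$-gon. *)

theory Defs
  imports "HOL-Combinatorics.Combinatorics"
begin

text \<open>Permutations of [n] = {1..n} are functions nat => nat that permute {1..n}
  (identity outside). Composition is right to left: (s o r) x = s (r x).\<close>

definition pairings :: "nat \<Rightarrow> (nat \<Rightarrow> nat) set" where
  "pairings n = {p. p permutes {1..n} \<and> (\<forall>x\<in>{1..n}. p (p x) = x \<and> p x \<noteq> x)}"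

definition ncycles :: "nat \<Rightarrow> (nat \<Rightarrow> nat) \<Rightarrow> nat" where
  "ncycles n s = card ((\<lambda>x. {(s ^^ k) x | k. True}) ` {1..n})"

definition long_cycle :: "nat \<Rightarrow> nat \<Rightarrow> nat" where
  "long_cycle n x = (if 1 \<le> x \<and> x < n then x + 1 else if x = n then 1 else x)"

definition a1 :: "nat \<Rightarrow> (nat \<Rightarrow> nat) set" where
  "a1 n = {p \<in> pairings n. int (ncycles n (inv p \<circ> long_cycle n)) = int n div 2 - 1}"

inductive_set gen_group :: "(nat \<Rightarrow> nat) \<Rightarrow> (nat \<Rightarrow> nat) \<Rightarrow> (nat \<Rightarrow> nat) set"
  for a b where
  gg_id: "id \<in> gen_group a b"
| gg_a: "a \<in> gen_group a b"
| gg_b: "b \<in> gen_group a b"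
| gg_comp: "f \<in> gen_group a b \<Longrightarrow> g \<in> gen_group a b \<Longrightarrow> f \<circ> g \<in> gen_group a b"
| gg_inv: "f \<in> gen_group a b \<Longrightarrow> inv f \<in> gen_group a b"

definition gammaT :: "nat \<Rightarrow> nat \<Rightarrow> nat \<Rightarrow> nat \<Rightarrow> nat" where
  "gammaT n u v = long_cycle n \<circ> transpose (if u = 1 then n else u - 1) v"

definition NCT_uv :: "nat \<Rightarrow> nat \<Rightarrow> nat \<Rightarrow> (nat \<Rightarrow> nat) set" where
  "NCT_uv n u v = {p \<in> pairings n.
     (\<forall>x\<in>{1..n}. \<forall>y\<in>{1..n}. \<exists>g\<in>gen_group p (gammaT n u v). g x = y) \<and>
     ncycles n p + ncycles n (inv p \<circ> gammaT n u v) + ncycles n (gammaT n u v) = n + 2 \<and>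
     p u = v \<and> p v = u \<and>
     (\<forall>a\<in>{1..<u}. p a \<in> {1..n} - {u..v})}"

definition NCT :: "nat \<Rightarrow> (nat \<Rightarrow> nat) set" where
  "NCT n = (\<Union>u\<in>{1..<n}. \<Union>v\<in>{u<..<n}. NCT_uv n u v)"

end

theory Submission
  imports Defs
begin

text \<open>
  Write sigma = p 1_n; for a pairing p = p^-1, so the genus condition of a_1(n) is about #(sigma).
  Multiplying a permutation by a transposition (a b) splits the cycle through a and b when they
  share one, and merges their two cycles otherwise. Peeling the 2-cycles off an involution one at a
  time, a noncrossing pairing has #(sigma) = n/2 + 1 (an innermost arc joins consecutive points),
  while a pairing with a crossing a < b < c < d, p a = c, p b = d, has #(sigma) <= n/2 - 1, because
  (b d)(a c) 1_n is a single cycle. Finally p gamma = (p u, p (v+1)) sigma.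

  For p in NC_{2,u,v}, condition (ii) says #(p gamma) = n/2, so #(sigma) >= n/2 - 1; and transitivity
  prevents p from preserving the gamma-invariant interval [u, v], which produces a crossing with the
  arc (u, v), so #(sigma) = n/2 - 1. Conversely, for p in a_1(n) take a crossing u < r < v < s,
  p u = v, p r = s, with u least: sigma v = p (v+1) lies on the cycle of v, giving (ii); the arc
  (r, s) joins the two cycles of gamma, giving transitivity; and minimality of u is (iv).
\<close>

section \<open>Counting cycles\<close>

definition num_cycles :: "'a set \<Rightarrow> ('a \<Rightarrow> 'a) \<Rightarrow> nat" where
  "num_cycles A s = card (orbit s ` A)"

lemma ncycles_eq_num_cycles: "permutation s \<Longrightarrow> ncycles n s = num_cycles {1..n} s"
  unfolding ncycles_def num_cycles_def by (simp add: orbit_altdef_permutation)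

lemma num_cycles_id: "finite A \<Longrightarrow> num_cycles A id = card A"
  unfolding num_cycles_def by (simp add: orbit_eq_singleton_iff[THEN iffD2] card_image inj_on_def)

lemma orbit_eq_of_mem: "permutation f \<Longrightarrow> y \<in> orbit f x \<Longrightarrow> orbit f y = orbit f x"
  by (metis cyclic_on_orbit' orbit_cyclic_eq3)

lemma orbit_subset_of_closed: "(\<And>y. y \<in> S \<Longrightarrow> f y \<in> S) \<Longrightarrow> x \<in> S \<Longrightarrow> orbit f x \<subseteq> S"
proof
  fix z assume closed: "\<And>y. y \<in> S \<Longrightarrow> f y \<in> S" and "x \<in> S" "z \<in> orbit f x"
  from this(3) show "z \<in> S" using \<open>x \<in> S\<close> by induct (auto intro: closed)
qed

lemma permutation_transpose_comp: "permutation Z \<Longrightarrow> permutation (transpose a b \<circ> Z)"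
  by (simp add: permutation_compose permutation_swap_id)

lemma orbit_transpose_comp_outside:
  assumes Z: "permutation Z" and x: "x \<notin> orbit Z a" "x \<notin> orbit Z b"
  shows "orbit (transpose a b \<circ> Z) x = orbit Z x"
proof -
  have "((transpose a b \<circ> Z) ^^ k) x = (Z ^^ k) x" for k
  proof (induction k)
    case (Suc k)
    have "(Z ^^ Suc k) x \<in> orbit Z x"
      using funpow_in_orbit permutation_self_in_orbit[OF Z] by metis
    then have "x \<in> orbit Z ((Z ^^ Suc k) x)"
      using orbit_eq_of_mem[OF Z] permutation_self_in_orbit[OF Z] by blast
    then have "(Z ^^ Suc k) x \<noteq> a" "(Z ^^ Suc k) x \<noteq> b"
      using x by auto
    with Suc show ?case by simp
  qed simp
  then show ?thesis unfolding orbit_altdef by simp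
qed

lemma orbit_subset_orbit_transpose_comp:
  assumes Z: "permutation Z" and b: "b \<notin> orbit Z a"
  shows "orbit Z a \<subseteq> orbit (transpose a b \<circ> Z) a"
proof -
  have self: "a \<in> orbit (transpose a b \<circ> Z) a"
    by (rule permutation_self_in_orbit[OF permutation_transpose_comp[OF Z]])
  have "(Z ^^ k) a \<in> orbit (transpose a b \<circ> Z) a" for k
  proof (induction k)
    case (Suc k)
    have "(Z ^^ Suc k) a \<noteq> b"
      using b funpow_in_orbit permutation_self_in_orbit[OF Z] by metis
    then have "(Z ^^ Suc k) a = a \<or> (transpose a b \<circ> Z) ((Z ^^ k) a) = (Z ^^ Suc k) a"
      by (auto simp: transpose_def)
    with Suc self show ?case by (metis orbit.step)
  qed (simp only: funpow_0 self)
  then show ?thesis unfolding orbit_altdef_permutation[OF Z] by blast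
qed

lemma orbit_transpose_comp_merge:
  assumes Z: "permutation Z" and b: "b \<notin> orbit Z a"
  shows "orbit (transpose a b \<circ> Z) a = orbit Z a \<union> orbit Z b"
proof
  let ?W = "transpose a b \<circ> Z"
  have W: "permutation ?W" by (rule permutation_transpose_comp[OF Z])
  have ab: "a \<in> orbit Z a \<union> orbit Z b" "b \<in> orbit Z a \<union> orbit Z b"
    using permutation_self_in_orbit[OF Z] by blast+
  have closed: "?W y \<in> orbit Z a \<union> orbit Z b" if "y \<in> orbit Z a \<union> orbit Z b" for y
  proof -
    have "Z y \<in> orbit Z a \<union> orbit Z b"
      using that by (auto intro: orbit.step)
    with ab show ?thesis by (auto simp: transpose_def)
  qed
  show "orbit ?W a \<subseteq> orbit Z a \<union> orbit Z b"
    by (rule orbit_subset_of_closed[of _ ?W, OF closed ab(1)])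
  have a: "a \<notin> orbit Z b"
  proof
    assume "a \<in> orbit Z b"
    then have "b \<in> orbit Z a" by (rule orbit_swap[OF permutation_self_in_orbit[OF Z]])
    with b show False ..
  qed
  have Z_inv: "Z (inv Z a) = a"
    using permutation_inverse_works(2)[OF Z] by (metis comp_apply id_apply)
  have "inv Z a \<in> orbit Z a"
    using orbit.base[of "inv Z" a] orbit_inv_eq[OF Z] Z_inv by simp
  then have "?W (inv Z a) \<in> orbit ?W a"
    using orbit_subset_orbit_transpose_comp[OF Z b] by (blast intro: orbit.step)
  then have "b \<in> orbit ?W a" using Z_inv by simp
  then have "orbit ?W b = orbit ?W a" by (rule orbit_eq_of_mem[OF W])
  moreover have "orbit Z b \<subseteq> orbit ?W b"
    using orbit_subset_orbit_transpose_comp[OF Z a] by (simp add: transpose_commute)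
  ultimately show "orbit Z a \<union> orbit Z b \<subseteq> orbit ?W a"
    using orbit_subset_orbit_transpose_comp[OF Z b] by blast
qed

lemma image_orbit_transpose_comp_merge:
  assumes Z: "permutation Z" and a: "a \<in> A" and b: "b \<notin> orbit Z a"
  shows "orbit (transpose a b \<circ> Z) ` A
    = insert (orbit Z a \<union> orbit Z b) (orbit Z ` A - {orbit Z a, orbit Z b})"
    (is "orbit ?W ` A = insert ?U (?orbits - _)")
proof (intro equalityI subsetI)
  have self: "x \<in> orbit Z x" for x by (rule permutation_self_in_orbit[OF Z])
  fix X assume "X \<in> orbit ?W ` A"
  then obtain x where x: "x \<in> A" "X = orbit ?W x" by blast
  show "X \<in> insert ?U (?orbits - {orbit Z a, orbit Z b})"
  proof (cases "x \<in> ?U")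
    case True
    then have "X = ?U"
      using x orbit_eq_of_mem[OF permutation_transpose_comp[OF Z]] orbit_transpose_comp_merge[OF Z b]
      by metis
    then show ?thesis by simp
  next
    case False
    then have "X = orbit Z x" "orbit Z x \<noteq> orbit Z a" "orbit Z x \<noteq> orbit Z b"
      using x orbit_transpose_comp_outside[OF Z] self by auto
    with x show ?thesis by auto
  qed
next
  fix X assume X: "X \<in> insert ?U (?orbits - {orbit Z a, orbit Z b})"
  show "X \<in> orbit ?W ` A"
  proof (cases "X = ?U")
    case True
    then show ?thesis using a orbit_transpose_comp_merge[OF Z b] by auto
  next
    case False
    then obtain x where x: "x \<in> A" "X = orbit Z x" "x \<notin> ?U"
      using X orbit_eq_of_mem[OF Z] by auto
    then have "X = orbit ?W x" using orbit_transpose_comp_outside[OF Z] by simp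
    with x(1) show ?thesis by blast
  qed
qed

lemma num_cycles_transpose_comp_merge:
  assumes Z: "Z permutes A" "finite A" and a: "a \<in> A" and b: "b \<in> A" "b \<notin> orbit Z a"
  shows "num_cycles A (transpose a b \<circ> Z) + 1 = num_cycles A Z"
proof -
  have pZ: "permutation Z" using Z by (auto simp: permutation_permutes)
  have self: "x \<in> orbit Z x" for x by (rule permutation_self_in_orbit[OF pZ])
  let ?U = "orbit Z a \<union> orbit Z b" and ?rest = "orbit Z ` A - {orbit Z a, orbit Z b}"
  have "?U \<notin> ?rest"
    using self orbit_eq_of_mem[OF pZ] by blast
  then have "card (orbit (transpose a b \<circ> Z) ` A) = card ?rest + 1"
    unfolding image_orbit_transpose_comp_merge[OF pZ a b(2)] using Z(2) by simp
  moreover have "card ?rest + 2 = card (orbit Z ` A)"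
  proof -
    have sub: "{orbit Z a, orbit Z b} \<subseteq> orbit Z ` A" using a b(1) by blast
    have "orbit Z a \<noteq> orbit Z b" using b(2) self by blast
    then have "card {orbit Z a, orbit Z b} = 2" by simp
    with card_mono[OF _ sub] show ?thesis using Z(2) by (simp add: card_Diff_subset[OF _ sub])
  qed
  ultimately show ?thesis unfolding num_cycles_def by simp
qed

text \<open>The Z-path from a up to (excluding) its first visit of b is closed under
  transpose a b \<circ> Z, which sends the last point of the path back to a.\<close>

lemma not_in_orbit_transpose_comp:
  assumes Z: "permutation Z" and ab: "a \<noteq> b" "b \<in> orbit Z a"
  shows "b \<notin> orbit (transpose a b \<circ> Z) a"
proof -
  let ?W = "transpose a b \<circ> Z" and ?m = "funpow_dist1 Z a b"
  define S where "S = (\<lambda>k. (Z ^^ k) a) ` {..<?m}"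
  have b_first: "(Z ^^ k) a \<noteq> b" if "k < ?m" for k
    using funpow_dist1_least[of k Z a b] that ab(1) by (cases k) auto
  have a_first: "(Z ^^ k) a \<noteq> a" if "0 < k" "k < ?m" for k
    using funpow_neq_less_funpow_dist1[OF ab(2), of 0 k] that by simp
  have "?W y \<in> S" if "y \<in> S" for y
  proof -
    obtain k where k: "k < ?m" "y = (Z ^^ k) a" using \<open>y \<in> S\<close> unfolding S_def by blast
    show ?thesis
    proof (cases "Suc k = ?m")
      case True
      then have "Z y = b" using k funpow_dist1_prop[OF ab(2)] by (metis comp_apply funpow.simps(2))
      then have "?W y = (Z ^^ 0) a" by simp
      then show ?thesis unfolding S_def by force
    next
      case False
      then have "Z y \<noteq> a" "Z y \<noteq> b"
        using k a_first[of "Suc k"] b_first[of "Suc k"] by simp_all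
      then have "?W y = (Z ^^ Suc k) a" using k by simp
      then show ?thesis unfolding S_def using k False by force
    qed
  qed
  moreover have "a \<in> S" unfolding S_def by force
  ultimately have "orbit ?W a \<subseteq> S" by (rule orbit_subset_of_closed)
  moreover have "b \<notin> S" unfolding S_def using b_first by blast
  ultimately show ?thesis by blast
qed

lemma num_cycles_transpose_comp_split:
  assumes Z: "Z permutes A" "finite A" and ab: "a \<in> A" "b \<in> A" "a \<noteq> b" "b \<in> orbit Z a"
  shows "num_cycles A (transpose a b \<circ> Z) = num_cycles A Z + 1"
proof -
  have "permutation Z" using Z by (auto simp: permutation_permutes)
  have "transpose a b \<circ> Z permutes A" using Z ab by (simp add: permutes_compose permutes_swap_id)
  from num_cycles_transpose_comp_merge[OF this Z(2) ab(1,2)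
      not_in_orbit_transpose_comp[OF \<open>permutation Z\<close> ab(3,4)]]
  show ?thesis by (simp add: comp_assoc[symmetric])
qed

lemma num_cycles_transpose_comp_le:
  assumes "Z permutes A" "finite A" "a \<in> A" "b \<in> A"
  shows "num_cycles A (transpose a b \<circ> Z) \<le> num_cycles A Z + 1"
  using num_cycles_transpose_comp_merge[OF assms] num_cycles_transpose_comp_split[OF assms]
  by (cases "a = b") fastforce+


section \<open>Involutions\<close>

lemma comp_transpose_eq:
  assumes "inj f"
  shows "f \<circ> transpose a b = transpose (f a) (f b) \<circ> f"
proof
  fix x
  show "(f \<circ> transpose a b) x = (transpose (f a) (f b) \<circ> f) x"
    using assms by (cases "x = a"; cases "x = b") (auto simp: inj_eq)
qed

lemma transpose_comp_involution_apply:
  assumes "\<forall>z. r (r z) = z"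
  shows "(transpose x (r x) \<circ> r) z = (if z = x \<or> z = r x then z else r z)"
proof -
  have "r z \<noteq> x" "r z \<noteq> r x" if "z \<noteq> x" "z \<noteq> r x"
    using assms that by metis+
  then show ?thesis using assms by (auto simp: transpose_def)
qed

lemma transpose_comp_involution:
  assumes r: "r permutes A" "\<forall>z. r (r z) = z" and x: "x \<in> A"
  shows "transpose x (r x) \<circ> r permutes A"
    and "\<forall>z. (transpose x (r x) \<circ> r) ((transpose x (r x) \<circ> r) z) = z"
    and "transpose x (r x) \<circ> (transpose x (r x) \<circ> r) = r"
    and "(transpose x (r x) \<circ> r) \<circ> transpose x (r x) = r"
proof -
  show perm: "transpose x (r x) \<circ> r permutes A"
    using r x by (simp add: permutes_compose permutes_swap_id permutes_in_image)
  show "\<forall>z. (transpose x (r x) \<circ> r) ((transpose x (r x) \<circ> r) z) = z"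
  proof
    fix z
    have "r z \<noteq> x" "r z \<noteq> r x" if "z \<noteq> x" "z \<noteq> r x"
      using r(2) that by metis+
    then show "(transpose x (r x) \<circ> r) ((transpose x (r x) \<circ> r) z) = z"
      using r(2) by (simp only: transpose_comp_involution_apply[OF r(2)]) auto
  qed
  show r_eq: "transpose x (r x) \<circ> (transpose x (r x) \<circ> r) = r"
    by (simp add: comp_assoc[symmetric])
  have "(transpose x (r x) \<circ> r) x = x" "(transpose x (r x) \<circ> r) (r x) = r x"
    by (simp_all add: transpose_comp_involution_apply[OF r(2)] del: comp_apply)
  moreover have "inj (transpose x (r x) \<circ> r)" by (rule permutes_inj[OF perm])
  ultimately show "(transpose x (r x) \<circ> r) \<circ> transpose x (r x) = r"
    using comp_transpose_eq r_eq by metis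
qed

lemma card_support_transpose_comp_involution:
  assumes "finite A" "\<forall>z. r (r z) = z" "x \<in> A" "r x \<noteq> x" "r permutes A"
  shows "card {z \<in> A. (transpose x (r x) \<circ> r) z \<noteq> z} + 2 = card {z \<in> A. r z \<noteq> z}"
proof -
  have support: "{z \<in> A. (transpose x (r x) \<circ> r) z \<noteq> z} = {z \<in> A. r z \<noteq> z} - {x, r x}"
    using assms(2) by (auto simp: transpose_comp_involution_apply simp del: comp_apply)
  have sub: "{x, r x} \<subseteq> {z \<in> A. r z \<noteq> z}"
    using assms by (auto simp: permutes_in_image)
  have "card {x, r x} = 2" using assms(4) by simp
  with card_mono[OF _ sub] show ?thesis
    unfolding support using assms(1) by (simp add: card_Diff_subset[OF _ sub])
qed

lemma involution_induct [consumes 3, case_names id step]: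
  assumes "finite A" "r permutes A" "\<forall>z. r (r z) = z"
    and id: "P id"
    and step: "\<And>r x. r permutes A \<Longrightarrow> \<forall>z. r (r z) = z \<Longrightarrow> x \<in> A \<Longrightarrow> r x \<noteq> x \<Longrightarrow>
      (\<And>y. y \<in> A \<Longrightarrow> r y \<noteq> y \<Longrightarrow> P (transpose y (r y) \<circ> r)) \<Longrightarrow> P r"
  shows "P r"
  using assms(2,3)
proof (induction "card {z \<in> A. r z \<noteq> z}" arbitrary: r rule: less_induct)
  case less
  show ?case
  proof (cases "\<exists>x\<in>A. r x \<noteq> x")
    case False
    then have "r = id" using less.prems(1) by (auto simp: fun_eq_iff permutes_not_in)
    then show ?thesis using id by simp
  next
    case True
    then obtain x where x: "x \<in> A" "r x \<noteq> x" by blast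
    show ?thesis
    proof (rule step[OF less.prems x])
      fix y assume y: "y \<in> A" "r y \<noteq> y"
      show "P (transpose y (r y) \<circ> r)"
        using less.hyps card_support_transpose_comp_involution[OF assms(1) less.prems(2) y less.prems(1)]
          transpose_comp_involution(1,2)[OF less.prems y(1)]
        by simp
    qed
  qed
qed

lemma num_cycles_involution_comp_le:
  assumes "finite A" "r permutes A" "\<forall>z. r (r z) = z" and Z: "Z permutes A"
  shows "2 * num_cycles A (r \<circ> Z) \<le> 2 * num_cycles A Z + card {z \<in> A. r z \<noteq> z}"
  using assms(1-3)
proof (induction rule: involution_induct)
  case (step r x)
  let ?r' = "transpose x (r x) \<circ> r"
  note r' = transpose_comp_involution[OF step(1,2,3)]
  have "2 * num_cycles A (?r' \<circ> Z) \<le> 2 * num_cycles A Z + card {z \<in> A. ?r' z \<noteq> z}"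
    using step(5)[OF step(3,4)] .
  moreover have "num_cycles A (r \<circ> Z) \<le> num_cycles A (?r' \<circ> Z) + 1"
  proof -
    have "transpose x (r x) \<circ> (?r' \<circ> Z) = r \<circ> Z" using r'(3) by (metis comp_assoc)
    with num_cycles_transpose_comp_le[OF permutes_compose[OF Z r'(1)] assms(1) step(3)]
    show ?thesis using permutes_in_image[OF step(1)] step(3) by metis
  qed
  ultimately show ?case
    using card_support_transpose_comp_involution[OF assms(1) step(2,3,4,1)] by linarith
qed simp

lemma num_cycles_involution:
  assumes "finite A" "r permutes A" "\<forall>z. r (r z) = z"
  shows "2 * num_cycles A r + card {z \<in> A. r z \<noteq> z} = 2 * card A"
  using assms(1-3)
proof (induction rule: involution_induct)
  case id
  then show ?case using num_cycles_id[OF assms(1)] by (simp add: id_def)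
next
  case (step r x)
  let ?r' = "transpose x (r x) \<circ> r"
  note r' = transpose_comp_involution[OF step(1,2,3)]
  have "?r' x = x" using transpose_comp_involution_apply[OF step(2), of x x] by simp
  then have "orbit ?r' x = {x}" by (rule orbit_eq_singleton_iff[THEN iffD2])
  then have "num_cycles A r + 1 = num_cycles A ?r'"
    using num_cycles_transpose_comp_merge[OF r'(1) assms(1) step(3), of "r x"] step(1,3,4)
    by (simp add: permutes_in_image r'(3))
  then show ?case
    using step(5)[OF step(3,4)] card_support_transpose_comp_involution[OF assms(1) step(2,3,4,1)]
    by linarith
qed


section \<open>The long cycle and the permutation gamma\<close>

lemma funpow_eq_add_of_succ:
  assumes "\<And>y. i \<le> y \<Longrightarrow> y < j \<Longrightarrow> f y = Suc y" "i + k \<le> j"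
  shows "(f ^^ k) i = i + k"
  using assms(2) by (induction k) (simp_all add: assms(1))

lemma interval_subset_orbit:
  assumes "permutation f" "\<And>y. i \<le> y \<Longrightarrow> y < j \<Longrightarrow> f y = Suc y"
  shows "{i..j} \<subseteq> orbit f i"
proof
  fix y assume "y \<in> {i..j}"
  then have "y = (f ^^ (y - i)) i" using funpow_eq_add_of_succ[where k = "y - i", OF assms(2)] by simp
  then show "y \<in> orbit f i"
    using funpow_in_orbit permutation_self_in_orbit[OF assms(1)] by metis
qed

lemma long_cycle_permutes: "1 \<le> n \<Longrightarrow> long_cycle n permutes {1..n}"
proof (rule bij_imp_permutes)
  assume "1 \<le> n"
  have inj: "inj_on (long_cycle n) {1..n}"
    by (auto simp: inj_on_def long_cycle_def split: if_splits)
  moreover have "long_cycle n ` {1..n} \<subseteq> {1..n}"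
    by (auto simp: long_cycle_def)
  ultimately show "bij_betw (long_cycle n) {1..n} {1..n}"
    by (simp add: bij_betw_def endo_inj_surj)
  show "long_cycle n x = x" if "x \<notin> {1..n}" for x
    using \<open>1 \<le> n\<close> that by (auto simp: long_cycle_def)
qed

lemma orbit_long_cycle:
  assumes "1 \<le> n" "x \<in> {1..n}"
  shows "orbit (long_cycle n) x = {1..n}"
proof -
  have perm: "permutation (long_cycle n)"
    using long_cycle_permutes[OF assms(1)] by (auto simp: permutation_permutes)
  have "{1..n} \<subseteq> orbit (long_cycle n) 1"
    by (rule interval_subset_orbit[OF perm]) (simp add: long_cycle_def)
  moreover have "orbit (long_cycle n) 1 \<subseteq> {1..n}"
    using permutes_orbit_subset[OF long_cycle_permutes] assms by simp
  ultimately have one: "orbit (long_cycle n) 1 = {1..n}" by (rule equalityI[rotated])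
  then have "x \<in> orbit (long_cycle n) 1" using assms(2) by simp
  from orbit_eq_of_mem[OF perm this] show ?thesis using one by simp
qed

lemma num_cycles_long_cycle: "1 \<le> n \<Longrightarrow> num_cycles {1..n} (long_cycle n) = 1"
proof -
  assume "1 \<le> n"
  then have "\<And>x. x \<in> {1..n} \<Longrightarrow> orbit (long_cycle n) x = {1..n}"
    by (rule orbit_long_cycle)
  then have "orbit (long_cycle n) ` {1..n} = (\<lambda>_. {1..n}) ` {1..n}"
    by (rule image_cong[OF refl])
  also have "\<dots> = {{1..n}}" using \<open>1 \<le> n\<close> by (simp add: image_constant_conv)
  finally show ?thesis unfolding num_cycles_def by simp
qed

lemma gammaT_eq:
  assumes "1 \<le> u" "u < v" "v < n"
  shows "gammaT n u v = transpose u (Suc v) \<circ> long_cycle n"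
proof -
  have "inj (long_cycle n)"
    using permutes_inj[OF long_cycle_permutes] assms by simp
  moreover have "long_cycle n (if u = 1 then n else u - 1) = u" "long_cycle n v = Suc v"
    using assms by (auto simp: long_cycle_def)
  ultimately show ?thesis
    unfolding gammaT_def by (simp add: comp_transpose_eq)
qed

lemma gammaT_permutes:
  assumes "1 \<le> u" "u < v" "v < n"
  shows "gammaT n u v permutes {1..n}"
  unfolding gammaT_eq[OF assms] using assms
  by (intro permutes_compose long_cycle_permutes permutes_swap_id) auto

lemma gammaT_apply_succ:
  assumes "1 \<le> u" "u < v" "v < n" "1 \<le> x" "x < n" "Suc x \<noteq> u" "x \<noteq> v"
  shows "gammaT n u v x = Suc x"
  using assms unfolding gammaT_eq[OF assms(1-3)] by (simp add: long_cycle_def)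

lemma gammaT_apply_right:
  assumes "1 \<le> u" "u < v" "v < n"
  shows "gammaT n u v v = u"
  using assms unfolding gammaT_eq[OF assms(1-3)] by (simp add: long_cycle_def)

lemma gammaT_apply_last:
  assumes "1 \<le> u" "u < v" "v < n" "1 < u"
  shows "gammaT n u v n = 1"
  using assms unfolding gammaT_eq[OF assms(1-3)] by (simp add: long_cycle_def)

lemma num_cycles_gammaT:
  assumes "1 \<le> u" "u < v" "v < n"
  shows "num_cycles {1..n} (gammaT n u v) = 2"
proof -
  have "Suc v \<in> orbit (long_cycle n) u" using orbit_long_cycle assms by auto
  then show ?thesis
    unfolding gammaT_eq[OF assms]
    using num_cycles_transpose_comp_split[OF long_cycle_permutes] num_cycles_long_cycle assms
    by simp
qed


section \<open>Pairings and crossings\<close>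

lemma pairings_permutes: "p \<in> pairings n \<Longrightarrow> p permutes {1..n}"
  by (simp add: pairings_def)

lemma pairing_involution: "p \<in> pairings n \<Longrightarrow> p (p z) = z"
  by (cases "z \<in> {1..n}") (auto simp: pairings_def permutes_not_in)

lemma inv_pairing: "p \<in> pairings n \<Longrightarrow> inv p = p"
  by (rule inv_unique_comp) (auto simp: pairing_involution)

lemma support_pairing: "p \<in> pairings n \<Longrightarrow> {z \<in> {1..n}. p z \<noteq> z} = {1..n}"
  by (auto simp: pairings_def)

lemma num_cycles_pairing:
  assumes "p \<in> pairings n"
  shows "2 * num_cycles {1..n} p = n"
  using num_cycles_involution[OF _ pairings_permutes[OF assms]] pairing_involution[OF assms]
    support_pairing[OF assms] by simp

definition has_crossing :: "(nat \<Rightarrow> nat) \<Rightarrow> bool" where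
  "has_crossing r \<longleftrightarrow> (\<exists>a b c d. a < b \<and> b < c \<and> c < d \<and> r a = c \<and> r b = d)"

lemma num_cycles_crossing_transpositions:
  assumes "1 \<le> a" "a < b" "b < c" "c < d" "d \<le> n"
  shows "num_cycles {1..n} (transpose b d \<circ> (transpose a c \<circ> long_cycle n)) = 1"
proof -
  let ?L = "long_cycle n"
  let ?W = "transpose a c \<circ> ?L"
  have L: "?L permutes {1..n}" using assms by (intro long_cycle_permutes) linarith
  have W: "?W permutes {1..n}"
    using assms by (intro permutes_compose[OF L] permutes_swap_id) auto
  have "c \<in> orbit ?L a" using orbit_long_cycle assms by simp
  then have "num_cycles {1..n} ?W = 2"
    using num_cycles_transpose_comp_split[OF L] num_cycles_long_cycle assms by simp
  moreover have "?W y \<in> {a..c - 1}" if "y \<in> {a..c - 1}" for y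
    using that assms by (cases "Suc y = c") (auto simp: long_cycle_def)
  then have "orbit ?W b \<subseteq> {a..c - 1}"
    using assms by (intro orbit_subset_of_closed) auto
  then have "d \<notin> orbit ?W b" using assms by auto
  then have "num_cycles {1..n} (transpose b d \<circ> ?W) + 1 = num_cycles {1..n} ?W"
    using assms by (intro num_cycles_transpose_comp_merge[OF W]) auto
  ultimately show ?thesis by simp
qed

lemma num_cycles_comp_long_cycle_crossing:
  assumes r: "r permutes {1..n}" "\<forall>z. r (r z) = z"
    and abcd: "a < b" "b < c" "c < d" "r a = c" "r b = d"
  shows "2 * num_cycles {1..n} (r \<circ> long_cycle n) + 2 \<le> card {z \<in> {1..n}. r z \<noteq> z}"
proof -
  have "r d = b" using r(2) abcd(5) by metis
  then have a: "a \<in> {1..n}" and d: "d \<in> {1..n}"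
    using abcd permutes_not_in[OF r(1)] by fastforce+
  then have b: "b \<in> {1..n}" using abcd by auto
  define r1 where "r1 = transpose a (r a) \<circ> r"
  define r2 where "r2 = transpose b (r1 b) \<circ> r1"
  note r1 = transpose_comp_involution[OF r a, folded r1_def, unfolded abcd(4)]
  have r1_b: "r1 b = d"
    unfolding r1_def using transpose_comp_involution_apply[OF r(2), of a b] abcd by simp
  note r2 = transpose_comp_involution[OF r1(1,2) b, folded r2_def, unfolded r1_b]
  have "2 * num_cycles {1..n} (r2 \<circ> (transpose b d \<circ> (transpose a c \<circ> long_cycle n)))
    \<le> 2 * num_cycles {1..n} (transpose b d \<circ> (transpose a c \<circ> long_cycle n))
      + card {z \<in> {1..n}. r2 z \<noteq> z}"
    using a b d abcd
    by (intro num_cycles_involution_comp_le[OF _ r2(1,2)] permutes_compose long_cycle_permutes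
        permutes_swap_id) auto
  moreover have "r2 \<circ> (transpose b d \<circ> (transpose a c \<circ> long_cycle n)) = r \<circ> long_cycle n"
    using r1(4) r2(4) by (metis comp_assoc)
  moreover have "card {z \<in> {1..n}. r2 z \<noteq> z} + 4 = card {z \<in> {1..n}. r z \<noteq> z}"
    using card_support_transpose_comp_involution[OF _ r(2) a _ r(1)]
      card_support_transpose_comp_involution[OF _ r1(2) b _ r1(1)] abcd r1_b
    unfolding r1_def r2_def by simp
  ultimately show ?thesis
    using num_cycles_crossing_transpositions[of a b c d n] a d abcd(1-3) by simp
qed

lemma has_crossing_transpose_comp_involution:
  assumes r: "\<forall>z. r (r z) = z" and "has_crossing (transpose x (r x) \<circ> r)"
  shows "has_crossing r"
proof -
  let ?r' = "transpose x (r x) \<circ> r"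
  obtain a b c d where abcd: "a < b" "b < c" "c < d" "?r' a = c" "?r' b = d"
    using assms(2) unfolding has_crossing_def by blast
  have agree: "?r' z = r z" if "?r' z \<noteq> z" for z
    using that transpose_comp_involution_apply[OF r, of x z] by presburger
  have "r a = c" using agree[of a] abcd(1,2,4) by (metis less_irrefl order.strict_trans)
  moreover have "r b = d" using agree[of b] abcd(2,3,5) by (metis less_irrefl order.strict_trans)
  ultimately show ?thesis using abcd(1-3) unfolding has_crossing_def by blast
qed

lemma has_crossing_least:
  assumes "has_crossing r"
  obtains a b c d where "a < b" "b < c" "c < d" "r a = c" "r b = d"
    and "\<And>a' b' c' d'. a' < b' \<Longrightarrow> b' < c' \<Longrightarrow> c' < d' \<Longrightarrow> r a' = c' \<Longrightarrow> r b' = d' \<Longrightarrow> a \<le> a'"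
proof -
  let ?starts = "\<lambda>a. \<exists>b c d. a < b \<and> b < c \<and> c < d \<and> r a = c \<and> r b = d"
  obtain a where start: "?starts a" and least: "\<And>a'. a' < a \<Longrightarrow> \<not> ?starts a'"
    using assms exists_least_iff[of ?starts] unfolding has_crossing_def by blast
  from start obtain b c d where abcd: "a < b" "b < c" "c < d" "r a = c" "r b = d" by blast
  show ?thesis
  proof (rule that[OF abcd])
    fix a' b' c' d' assume "a' < b'" "b' < c'" "c' < d'" "r a' = c'" "r b' = d'"
    then show "a \<le> a'" using least not_less by blast
  qed
qed

text \<open>A shortest arc contains no moved point: the partner of such a point would lie either
  strictly inside, giving a shorter arc, or outside, giving a crossing.\<close>

lemma noncrossing_innermost_arc:
  assumes r: "\<forall>z. r (r z) = z" "\<not> has_crossing r" "r x \<noteq> x"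
  obtains p where "p < r p" "\<And>y. p < y \<Longrightarrow> y < r p \<Longrightarrow> r y = y"
proof -
  have "\<exists>p. p < r p" using r(1,3) by (metis linorder_neqE_nat)
  then obtain p where arc: "p < r p" and shortest: "\<And>y. y < r y \<Longrightarrow> r p - p \<le> r y - y"
    using ex_has_least_nat[of "\<lambda>y. y < r y" _ "\<lambda>y. r y - y"] by metis
  have "r y = y" if y: "p < y" "y < r p" for y
  proof (rule ccontr)
    assume "r y \<noteq> y"
    have rr: "r (r y) = y" "r (r p) = p" using r(1) by auto
    consider "r y < p" | "r y = p" | "p < r y" "r y < r p" | "r y = r p" | "r p < r y"
      by linarith
    then show False
    proof cases
      case 1
      then show ?thesis using r(2) y rr unfolding has_crossing_def by blast
    next
      case 2
      then show ?thesis using y rr by simp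
    next
      case 3
      then show ?thesis
        using shortest[of y] shortest[of "r y"] y rr \<open>r y \<noteq> y\<close> by (cases "y < r y") auto
    next
      case 4
      then show ?thesis using y rr by (metis less_irrefl)
    next
      case 5
      then show ?thesis using r(2) y unfolding has_crossing_def by blast
    qed
  qed
  with arc show ?thesis using that by blast
qed

lemma num_cycles_comp_long_cycle_noncrossing:
  assumes n: "1 \<le> n" and r: "r permutes {1..n}" "\<forall>z. r (r z) = z" "\<not> has_crossing r"
  shows "2 * num_cycles {1..n} (r \<circ> long_cycle n) = card {z \<in> {1..n}. r z \<noteq> z} + 2"
  using finite_atLeastAtMost[of 1 n] r
proof (induction rule: involution_induct)
  case id
  then show ?case using num_cycles_long_cycle[OF n] by simp
next
  case (step r x)
  let ?L = "long_cycle n"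
  obtain p where arc: "p < r p" and inner: "\<And>y. p < y \<Longrightarrow> y < r p \<Longrightarrow> r y = y"
    using noncrossing_innermost_arc[OF step(2,6,4)] by blast
  have p: "p \<in> {1..n}" "r p \<in> {1..n}"
    using arc permutes_not_in[OF step(1), of p] permutes_in_image[OF step(1), of p] by fastforce+
  let ?r' = "transpose p (r p) \<circ> r"
  note r' = transpose_comp_involution[OF step(1,2) p(1)]
  have "\<not> has_crossing ?r'"
    using step(6) has_crossing_transpose_comp_involution[OF step(2)] by blast
  then have IH: "2 * num_cycles {1..n} (?r' \<circ> ?L) = card {z \<in> {1..n}. ?r' z \<noteq> z} + 2"
    using step(5)[OF p(1)] arc by (simp add: comp_def)
  have Z: "?r' \<circ> ?L permutes {1..n}" by (rule permutes_compose[OF long_cycle_permutes[OF n] r'(1)])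
  have "{p..r p} \<subseteq> orbit (?r' \<circ> ?L) p"
  proof (rule interval_subset_orbit)
    show "permutation (?r' \<circ> ?L)" using Z by (auto simp: permutation_permutes)
    show "(?r' \<circ> ?L) y = Suc y" if "p \<le> y" "y < r p" for y
      using that p inner[of "Suc y"] transpose_comp_involution_apply[OF step(2), of p "Suc y"]
      by (auto simp: long_cycle_def)
  qed
  then have "num_cycles {1..n} (transpose p (r p) \<circ> (?r' \<circ> ?L)) = num_cycles {1..n} (?r' \<circ> ?L) + 1"
    using arc p by (intro num_cycles_transpose_comp_split[OF Z]) auto
  moreover have "transpose p (r p) \<circ> (?r' \<circ> ?L) = r \<circ> ?L"
    by (simp add: comp_assoc[symmetric])
  ultimately have "2 * num_cycles {1..n} (r \<circ> ?L) = card {z \<in> {1..n}. r z \<noteq> z} + 2"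
    using IH card_support_transpose_comp_involution[OF _ step(2) p(1) _ step(1)] arc by simp
  then show ?case by (simp add: comp_def)
qed


section \<open>The group generated by a pairing and gamma\<close>

lemma gen_group_bij:
  assumes "bij a" "bij b" "g \<in> gen_group a b"
  shows "bij g"
  using assms(3)
proof induction
  case (gg_comp f g)
  then show ?case by (metis bij_comp)
qed (simp_all add: assms bij_imp_bij_inv bij_id[unfolded id_def])

lemma gen_group_image_eq:
  assumes "finite S" "bij a" "bij b" "a ` S \<subseteq> S" "b ` S \<subseteq> S" and "g \<in> gen_group a b"
  shows "g ` S = S"
  using assms(6)
proof (induction rule: gen_group.induct)
  case gg_a
  show ?case using assms(1,2,4) by (intro endo_inj_surj) (auto intro: bij_is_inj inj_on_subset)
next
  case gg_b
  show ?case using assms(1,3,5) by (intro endo_inj_surj) (auto intro: bij_is_inj inj_on_subset)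
next
  case (gg_comp f g)
  then show ?case by (metis image_comp)
next
  case (gg_inv f)
  have "bij f" using gen_group_bij[OF assms(2,3) gg_inv(1)] .
  then show ?case using gg_inv(2) by (metis bij_is_inj image_inv_f_f)
qed simp

definition gen_orbit :: "(nat \<Rightarrow> nat) \<Rightarrow> (nat \<Rightarrow> nat) \<Rightarrow> nat \<Rightarrow> nat set" where
  "gen_orbit a b x = {g x | g. g \<in> gen_group a b}"

lemma gen_orbit_self: "x \<in> gen_orbit a b x"
  unfolding gen_orbit_def by (rule CollectI, rule exI[of _ id]) (simp add: gen_group.gg_id)

lemma gen_orbit_comp:
  assumes "f \<in> gen_group a b" "y \<in> gen_orbit a b x"
  shows "f y \<in> gen_orbit a b x"
proof -
  obtain g where "g \<in> gen_group a b" "y = g x" using assms(2) unfolding gen_orbit_def by blast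
  then show ?thesis
    unfolding gen_orbit_def using gen_group.gg_comp[OF assms(1)] by (intro CollectI exI[of _ "f \<circ> g"]) simp
qed

lemma gen_orbit_trans: "y \<in> gen_orbit a b x \<Longrightarrow> z \<in> gen_orbit a b y \<Longrightarrow> z \<in> gen_orbit a b x"
  using gen_orbit_comp unfolding gen_orbit_def[of a b y] by blast

lemma gen_orbit_sym:
  assumes "bij a" "bij b" "y \<in> gen_orbit a b x"
  shows "x \<in> gen_orbit a b y"
proof -
  obtain g where g: "g \<in> gen_group a b" "y = g x" using assms(3) unfolding gen_orbit_def by blast
  then have "inv g y = x" using gen_group_bij[OF assms(1,2)] by (simp add: bij_is_inj)
  then show ?thesis unfolding gen_orbit_def using gen_group.gg_inv[OF g(1)] by blast
qed

lemma interval_subset_gen_orbit: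
  assumes "\<And>y. i \<le> y \<Longrightarrow> y < j \<Longrightarrow> b y = Suc y"
  shows "{i..j} \<subseteq> gen_orbit a b i"
proof
  fix y assume "y \<in> {i..j}"
  have "(b ^^ k) i \<in> gen_orbit a b i" for k
    by (induction k) (simp_all add: gen_orbit_self gen_orbit_comp gen_group.gg_b)
  moreover have "y = (b ^^ (y - i)) i"
    using funpow_eq_add_of_succ[where k = "y - i", OF assms] \<open>y \<in> {i..j}\<close> by simp
  ultimately show "y \<in> gen_orbit a b i" by metis
qed

lemma transitive_of_subset_gen_orbit:
  assumes "bij a" "bij b" "S \<subseteq> gen_orbit a b x"
  shows "\<forall>y\<in>S. \<forall>z\<in>S. \<exists>g\<in>gen_group a b. g y = z"
proof (intro ballI)
  fix y z assume "y \<in> S" "z \<in> S"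
  then have "z \<in> gen_orbit a b y"
    using assms gen_orbit_sym gen_orbit_trans by blast
  then show "\<exists>g\<in>gen_group a b. g y = z" unfolding gen_orbit_def by blast
qed

lemma gammaT_transitive:
  assumes p: "p permutes {1..n}" and uv: "1 \<le> u" "u < v" "v < n"
    and rs: "r \<in> {u..v}" "s \<in> {Suc v..n}" "p r = s"
  shows "\<forall>x\<in>{1..n}. \<forall>y\<in>{1..n}. \<exists>g\<in>gen_group p (gammaT n u v). g x = y"
proof -
  let ?O = "gen_orbit p (gammaT n u v)"
  have bij: "bij p" "bij (gammaT n u v)"
    using permutes_bij p gammaT_permutes[OF uv] by blast+
  have succ: "gammaT n u v y = Suc y" if "1 \<le> y" "y < n" "Suc y \<noteq> u" "y \<noteq> v" for y
    using gammaT_apply_succ[OF uv that] .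
  have mid: "{u..v} \<subseteq> ?O u"
    by (rule interval_subset_gen_orbit) (use succ uv in auto)
  have "{Suc v..n} \<subseteq> ?O (Suc v)"
    by (rule interval_subset_gen_orbit) (use succ uv in auto)
  moreover have "s \<in> ?O u"
    using gen_orbit_comp[OF gen_group.gg_a] mid rs by blast
  moreover have "Suc v \<in> ?O s"
    using gen_orbit_sym[OF bij] calculation(1) rs(2) by blast
  ultimately have right: "{Suc v..n} \<subseteq> ?O u"
    using gen_orbit_trans by blast
  have left: "{1..u - 1} \<subseteq> ?O u"
  proof (cases "1 < u")
    case True
    have "n \<in> ?O u" using right uv by auto
    then have "1 \<in> ?O u"
      using gen_orbit_comp[OF gen_group.gg_b] gammaT_apply_last[OF uv True] by metis
    moreover have "{1..u - 1} \<subseteq> ?O 1"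
      by (rule interval_subset_gen_orbit) (use succ uv in auto)
    ultimately show ?thesis using gen_orbit_trans by blast
  qed simp
  have "{1..n} \<subseteq> ?O u"
  proof
    fix y assume "y \<in> {1..n}"
    then have "y \<in> {1..u - 1} \<or> y \<in> {u..v} \<or> y \<in> {Suc v..n}" by auto
    then show "y \<in> ?O u" using left mid right by blast
  qed
  then show ?thesis by (rule transitive_of_subset_gen_orbit[OF bij])
qed

lemma arc_leaves_of_gammaT_transitive:
  assumes p: "p permutes {1..n}" and uv: "1 \<le> u" "u < v" "v < n"
    and tr: "\<forall>x\<in>{1..n}. \<forall>y\<in>{1..n}. \<exists>g\<in>gen_group p (gammaT n u v). g x = y"
  shows "\<exists>x\<in>{u..v}. p x \<notin> {u..v}"
proof (rule ccontr)
  assume "\<not> ?thesis"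
  then have "p ` {u..v} \<subseteq> {u..v}" by auto
  moreover have "gammaT n u v ` {u..v} \<subseteq> {u..v}"
  proof
    fix y assume "y \<in> gammaT n u v ` {u..v}"
    then obtain x where x: "x \<in> {u..v}" "y = gammaT n u v x" by blast
    then show "y \<in> {u..v}"
      using uv gammaT_apply_right[OF uv] gammaT_apply_succ[OF uv, of x] by (cases "x = v") auto
  qed
  moreover obtain g where g: "g \<in> gen_group p (gammaT n u v)" "g u = n"
    using tr uv by force
  moreover have "bij p" "bij (gammaT n u v)"
    using permutes_bij p gammaT_permutes[OF uv] by blast+
  ultimately have "g ` {u..v} = {u..v}" by (intro gen_group_image_eq) auto
  moreover have "u \<in> {u..v}" using uv by simp
  ultimately have "g u \<in> {u..v}" by blast
  then show False using g(2) uv by simp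
qed


section \<open>Genus one pairings\<close>

lemma comp_gammaT:
  assumes "inj p" "1 \<le> u" "u < v" "v < n"
  shows "p \<circ> gammaT n u v = transpose (p u) (p (Suc v)) \<circ> (p \<circ> long_cycle n)"
  unfolding gammaT_eq[OF assms(2-4)] comp_assoc[symmetric] comp_transpose_eq[OF assms(1)] ..

lemma num_cycles_comp_gammaT_split:
  assumes p: "p \<in> pairings n" and uv: "1 \<le> u" "u < v" "v < n" and arc: "p u = v"
  shows "num_cycles {1..n} (p \<circ> gammaT n u v) = num_cycles {1..n} (p \<circ> long_cycle n) + 1"
proof -
  let ?\<sigma> = "p \<circ> long_cycle n"
  note perm = pairings_permutes[OF p]
  have \<sigma>: "?\<sigma> permutes {1..n}" using perm uv by (intro permutes_compose long_cycle_permutes) auto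
  have "?\<sigma> v = p (Suc v)" using uv by (simp add: long_cycle_def)
  then have "p (Suc v) \<in> orbit ?\<sigma> v" by (metis orbit.base)
  moreover have "p (Suc v) \<noteq> v"
  proof
    assume "p (Suc v) = v"
    then have "p v = Suc v" using pairing_involution[OF p, of "Suc v"] by simp
    moreover have "p v = u" using pairing_involution[OF p, of u] arc by simp
    ultimately show False using uv by simp
  qed
  ultimately have "num_cycles {1..n} (transpose v (p (Suc v)) \<circ> ?\<sigma>) = num_cycles {1..n} ?\<sigma> + 1"
    using uv by (intro num_cycles_transpose_comp_split[OF \<sigma>] permutes_in_image[OF perm, THEN iffD2])
      auto
  then show ?thesis unfolding comp_gammaT[OF permutes_inj[OF perm] uv] arc .
qed

lemma a1_iff:
  assumes p: "p \<in> pairings n"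
  shows "p \<in> a1 n \<longleftrightarrow> 2 * num_cycles {1..n} (p \<circ> long_cycle n) + 2 = n"
proof (cases "n = 0")
  case True
  then show ?thesis by (simp add: a1_def)
next
  case False
  then have "p \<circ> long_cycle n permutes {1..n}"
    using pairings_permutes[OF p] by (intro permutes_compose long_cycle_permutes) auto
  then have "ncycles n (inv p \<circ> long_cycle n) = num_cycles {1..n} (p \<circ> long_cycle n)"
    using inv_pairing[OF p] ncycles_eq_num_cycles by (auto simp: permutation_permutes)
  moreover have "int n div 2 = int (num_cycles {1..n} p)"
    using num_cycles_pairing[OF p] by (simp flip: zdiv_int)
  moreover have "n = 2 * num_cycles {1..n} p" using num_cycles_pairing[OF p] ..
  ultimately show ?thesis using p unfolding a1_def by auto
qed

lemma NCT_uv_cycle_condition_iff: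
  assumes p: "p \<in> pairings n" and uv: "1 \<le> u" "u < v" "v < n"
  shows "ncycles n p + ncycles n (inv p \<circ> gammaT n u v) + ncycles n (gammaT n u v) = n + 2
    \<longleftrightarrow> 2 * num_cycles {1..n} (p \<circ> gammaT n u v) = n"
proof -
  have perms: "permutation p" "permutation (gammaT n u v)" "permutation (p \<circ> gammaT n u v)"
    using pairings_permutes[OF p] gammaT_permutes[OF uv]
    by (auto simp: permutation_permutes intro: permutes_compose)
  show ?thesis
    using ncycles_eq_num_cycles[OF perms(1)] ncycles_eq_num_cycles[OF perms(2)]
      ncycles_eq_num_cycles[OF perms(3)] inv_pairing[OF p] num_cycles_pairing[OF p]
      num_cycles_gammaT[OF uv]
    by auto
qed

lemma NCT_uv_subset_a1:
  assumes p: "p \<in> NCT_uv n u v" and uv: "1 \<le> u" "u < v" "v < n"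
  shows "p \<in> a1 n"
proof -
  have pp: "p \<in> pairings n" and tr: "\<forall>x\<in>{1..n}. \<forall>y\<in>{1..n}. \<exists>g\<in>gen_group p (gammaT n u v). g x = y"
    and puv: "p u = v" "p v = u"
    and cycles: "2 * num_cycles {1..n} (p \<circ> gammaT n u v) = n"
    using p NCT_uv_cycle_condition_iff[of p n u v] uv unfolding NCT_uv_def by auto
  note perm = pairings_permutes[OF pp] and inv = pairing_involution[OF pp]
  let ?\<sigma> = "p \<circ> long_cycle n"
  have \<sigma>: "?\<sigma> permutes {1..n}" using perm uv by (intro permutes_compose long_cycle_permutes) auto
  have "num_cycles {1..n} (p \<circ> gammaT n u v) \<le> num_cycles {1..n} ?\<sigma> + 1"
    unfolding comp_gammaT[OF permutes_inj[OF perm] uv] using uv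
    by (intro num_cycles_transpose_comp_le[OF \<sigma>] permutes_in_image[OF perm, THEN iffD2]) auto
  then have lower: "n \<le> 2 * num_cycles {1..n} ?\<sigma> + 2" using cycles by linarith
  obtain x where x: "x \<in> {u..v}" "p x \<notin> {u..v}"
    using arc_leaves_of_gammaT_transitive[OF perm uv tr] by blast
  then have "x \<noteq> u" "x \<noteq> v" using puv uv by auto
  then have "2 * num_cycles {1..n} ?\<sigma> + 2 \<le> card {z \<in> {1..n}. p z \<noteq> z}"
  proof (cases "p x < u")
    case True
    then show ?thesis
      using x \<open>x \<noteq> u\<close> \<open>x \<noteq> v\<close> puv inv
      by (intro num_cycles_comp_long_cycle_crossing[OF perm, of "p x" u x v]) auto
  next
    case False
    then show ?thesis
      using x \<open>x \<noteq> u\<close> \<open>x \<noteq> v\<close> puv inv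
      by (intro num_cycles_comp_long_cycle_crossing[OF perm, of u x v "p x"]) auto
  qed
  then show ?thesis using lower a1_iff[OF pp] support_pairing[OF pp] by simp
qed

lemma a1_subset_NCT:
  assumes p: "p \<in> a1 n"
  shows "p \<in> NCT n"
proof -
  have pp: "p \<in> pairings n" using p by (simp add: a1_def)
  note perm = pairings_permutes[OF pp] and inv = pairing_involution[OF pp]
  let ?\<sigma> = "p \<circ> long_cycle n"
  have cycles: "2 * num_cycles {1..n} ?\<sigma> + 2 = n" using p a1_iff[OF pp] by simp
  have "has_crossing p"
  proof (rule ccontr)
    assume "\<not> has_crossing p"
    then have "2 * num_cycles {1..n} ?\<sigma> = n + 2"
      using num_cycles_comp_long_cycle_noncrossing[OF _ perm] inv support_pairing[OF pp] cycles
      by simp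
    then show False using cycles by simp
  qed
  then obtain u r v s where crossing: "u < r" "r < v" "v < s" "p u = v" "p r = s"
    and least: "\<And>a' b' c' d'. a' < b' \<Longrightarrow> b' < c' \<Longrightarrow> c' < d' \<Longrightarrow> p a' = c' \<Longrightarrow> p b' = d' \<Longrightarrow> u \<le> a'"
    by (rule has_crossing_least) blast
  have "u \<in> {1..n}" "s \<in> {1..n}"
    using crossing inv permutes_not_in[OF perm] by (metis less_irrefl order.strict_trans)+
  then have uv: "1 \<le> u" "u < v" "v < n" and s: "s \<in> {Suc v..n}" using crossing by auto
  have pvu: "p v = u" using inv crossing(4) by metis
  have transitive: "\<forall>x\<in>{1..n}. \<forall>y\<in>{1..n}. \<exists>g\<in>gen_group p (gammaT n u v). g x = y"
    using crossing s by (intro gammaT_transitive[OF perm uv, of r s]) auto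
  have "2 * num_cycles {1..n} (p \<circ> gammaT n u v) = n"
    using num_cycles_comp_gammaT_split[OF pp uv crossing(4)] cycles by simp
  then have cycle_condition:
    "ncycles n p + ncycles n (inv p \<circ> gammaT n u v) + ncycles n (gammaT n u v) = n + 2"
    using NCT_uv_cycle_condition_iff[OF pp uv] by simp
  have "p a \<in> {1..n} - {u..v}" if a: "a \<in> {1..<u}" for a
  proof -
    have "a \<noteq> u" "a \<noteq> v" using a uv by auto
    then have "p a \<noteq> u" "p a \<noteq> v" using inv[of a] crossing(4) pvu by auto
    moreover have "\<not> (u < p a \<and> p a < v)"
    proof
      assume "u < p a \<and> p a < v"
      moreover have "a < u" using a by simp
      ultimately have "u \<le> a" using least[of a u "p a" v] crossing(4) by blast
      with \<open>a < u\<close> show False by simp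
    qed
    moreover have "p a \<in> {1..n}" using a uv permutes_in_image[OF perm, of a] by simp
    ultimately show ?thesis by auto
  qed
  then have "p \<in> NCT_uv n u v"
    unfolding NCT_uv_def using pp transitive cycle_condition crossing(4) pvu by blast
  moreover have "u \<in> {1..<n}" "v \<in> {u<..<n}" using uv by auto
  ultimately show ?thesis unfolding NCT_def by blast
qed

theorem proposition6:
  fixes n :: nat
  assumes "even n"
  shows "a1 n = NCT n"
proof
  show "a1 n \<subseteq> NCT n" using a1_subset_NCT by blast
  show "NCT n \<subseteq> a1 n" unfolding NCT_def using NCT_uv_subset_a1 by auto
qed

end
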